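(* Let $q$, $r_1,r_2,r_3$, $m_1$ and the neighborhoods $V_i^l$ be as described in the context, let $H_1,H_2,H_3\subset\mathbb{C}$ be arbitrary open sets, $H:=\bigcup_{i=1}^3H_i$ and $Z^l:=\bigcup_{i=1}^3H_i\times V_i^l$. Let $K$ be a compact subset of $H$. There exist $\delta_0>0$ and $l_0\ge1$ such that for every $l\ge l_0$ and every holomorphic map $g\colon Z^l\to K\times\mathbb{C}$ of the form $g(z,w)=(h(z,w),q^{lm_1}(w))$ which contracts the cone field $C_{\delta_0}$ on $Z^l$, there is $\alpha>0$ with the following property: if $f$ is a holomorphic map on $Z^l$ with $\|f-g\|_{C^1,Z^l}\le\alpha$, $i\in\{1,2,3\}$ and $\sigma\colon V_i^l\to H_i$ is holomorphic with $\sup_{V_i^l}|\sigma'|<\delta_0$, then $\Lambda_f:=\bigcap_{n\ge0}f^{-n}(\overline{Z^l})$ intersects the graph $\Gamma_\sigma:=\{(\sigma(w),w):w\in V_i^l\}$.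
   Context: $q$ is a complex polynomial of degree $d\ge2$; $r_1,r_2,r_3$ are distinct repelling periodic points of $q$ of period $m_1$, with multipliers $\chi_i$, not in the postcritical set of $q$. The $V_i^l$ ($l\ge0$) are connected open neighborhoods of $r_i$ constructed by the paper with the properties: $q^{m_1}$ maps $V_i^{l+1}$ biholomorphically onto $V_i^l$; ${\rm diam}(V_i^l)$ decreases exponentially in $l$; and there exist $A>0$, $l_0'\ge1$ such that for $l\ge l_0'$: $|(q^{lm_1})'|\ge A|\chi_i|^l>1$ on $V_i^l$, $\overline{\bigcup_jV_j^l}\subset q^{lm_1}(V_i^l)$, and $q^{lm_1}$ maps $V_i^l\cap q^{-lm_1}(V_j^l)$ biholomorphically onto $V_j^l$. For $\delta>0$, $C_\delta:=\{(a,b)\in\mathbb{C}^2:|a|<\delta|b|\}$ viewed as a constant cone field on $\mathbb{C}^2$; a map $g$ contracts $C_\delta$ on $U$ if there is $0<\delta'<\delta$ with $D_xg(C_\delta)\subset C_{\delta'}$ for all $x\in U$. *)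

theory Defs
  imports "HOL-Complex_Analysis.Complex_Analysis" "HOL-Computational_Algebra.Polynomial"
begin

definition crit_points :: "complex poly \<Rightarrow> complex set" where
  "crit_points q = {c. poly (pderiv q) c = 0}"

definition postcritical_set :: "complex poly \<Rightarrow> complex set" where
  "postcritical_set q = (\<Union>n\<in>{1..}. (poly q ^^ n) ` crit_points q)"

definition cmul2 :: "complex \<Rightarrow> complex \<times> complex \<Rightarrow> complex \<times> complex" where
  "cmul2 c v = (c * fst v, c * snd v)"

definition holomorphic2_on ::
  "(complex \<times> complex \<Rightarrow> complex \<times> complex) \<Rightarrow> (complex \<times> complex) set \<Rightarrow> bool" where
  "holomorphic2_on f U \<longleftrightarrow>
     (\<forall>x\<in>U. \<exists>D. (f has_derivative D) (at x) \<and> (\<forall>c v. D (cmul2 c v) = cmul2 c (D v)))"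

definition cone :: "real \<Rightarrow> (complex \<times> complex) set" where
  "cone \<delta> = {(a, b). cmod a < \<delta> * cmod b}"

definition contracts_cone ::
  "(complex \<times> complex \<Rightarrow> complex \<times> complex) \<Rightarrow> (complex \<times> complex) set \<Rightarrow> real \<Rightarrow> bool" where
  "contracts_cone g U \<delta> \<longleftrightarrow>
     (\<exists>\<delta>'. 0 < \<delta>' \<and> \<delta>' < \<delta> \<and>
        (\<forall>x\<in>U. \<forall>v\<in>cone \<delta>. frechet_derivative g (at x) v \<in> cone \<delta>'))"

definition C1_close ::
  "(complex \<times> complex) set \<Rightarrow> (complex \<times> complex \<Rightarrow> complex \<times> complex)
     \<Rightarrow> (complex \<times> complex \<Rightarrow> complex \<times> complex) \<Rightarrow> real \<Rightarrow> bool" where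
  "C1_close U f g \<alpha> \<longleftrightarrow>
     (\<forall>x\<in>U. norm (f x - g x) \<le> \<alpha> \<and>
        onorm (\<lambda>v. frechet_derivative f (at x) v - frechet_derivative g (at x) v) \<le> \<alpha>)"

fun iter_preimage ::
  "('a \<Rightarrow> 'a) \<Rightarrow> 'a set \<Rightarrow> nat \<Rightarrow> 'a set \<Rightarrow> 'a set" where
  "iter_preimage f U 0 A = A"
| "iter_preimage f U (Suc n) A = {x \<in> U. f x \<in> iter_preimage f U n A}"

definition Lambda_set ::
  "(complex \<times> complex \<Rightarrow> complex \<times> complex) \<Rightarrow> (complex \<times> complex) set \<Rightarrow> (complex \<times> complex) set" where
  "Lambda_set f Z = (\<Inter>n. iter_preimage f Z n (closure Z))"

end

theory Submission
  imports Defs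
begin

text \<open>
  For large l the fibre map \<open>Q = q\<^sup>l\<^sup>m\<^sup>1\<close> maps each \<open>V\<^sub>k\<^sup>l\<close> expandingly onto
  \<open>V\<^sub>k\<^sup>0\<close>, which contains a ball of fixed radius around every \<open>r\<^sub>j\<close>, while \<open>V\<^sub>k\<^sup>l\<close> itself lies in
  a small ball around \<open>r\<^sub>k\<close>. Take a holomorphic graph over \<open>V\<^sub>k\<^sup>l\<close> of slope below \<open>\<delta>\<^sub>0\<close> and
  parametrise it by \<open>y = Q w\<close>. Its image under \<open>f\<close> is a curve \<open>y \<mapsto> (A y, \<phi> y)\<close>: because \<open>g\<close>
  contracts the cone field and is fibred over \<open>Q\<close>, and \<open>f\<close> is \<open>C\<^sup>1\<close>-close to \<open>g\<close>, the map
  \<open>\<phi>\<close> is a small perturbation of the identity and \<open>A\<close> has derivative below \<open>\<delta>\<^sub>0\<close>.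
  Inverting \<open>\<phi>\<close> over a ball around a suitable \<open>r\<^sub>j\<close> (chosen by a Lebesgue number of the cover
  of \<open>K\<close> by the \<open>H\<^sub>j\<close>) shows that the image contains a graph of slope below \<open>\<delta>\<^sub>0\<close> over
  \<open>V\<^sub>j\<^sup>l\<close>. Iterating from \<open>\<sigma>\<close> produces compact pieces \<open>\<Gamma>\<^sub>n\<close> of graphs with
  \<open>\<Gamma>\<^sub>n\<^sub>+\<^sub>1 \<subseteq> f(\<Gamma>\<^sub>n)\<close>, and a nested intersection of compact sets yields a point of the graph of
  \<open>\<sigma>\<close> whose whole forward orbit stays in \<open>Z\<^sup>l\<close>.
\<close>

lemma holomorphic_on_funpow_poly: "(poly q ^^ n) holomorphic_on S"
proof (induction n arbitrary: S)
  case 0 then show ?case by (simp add: holomorphic_on_id id_def)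
next
  case (Suc n)
  have "(poly q \<circ> (poly q ^^ n)) holomorphic_on S"
    by (rule holomorphic_on_compose[OF Suc]) (auto intro: holomorphic_intros)
  then show ?case by (simp add: o_def)
qed

lemma bij_betw_funpow_tower:
  assumes "\<And>l. bij_betw Q (V (Suc l)) (V l)"
  shows "bij_betw (Q ^^ l) (V l) (V 0)"
proof (induction l)
  case 0 then show ?case by (simp add: bij_betw_def)
next
  case (Suc l)
  have "bij_betw ((Q ^^ l) \<circ> Q) (V (Suc l)) (V 0)"
    by (rule bij_betw_trans[OF assms Suc])
  then show ?case by (simp only: funpow_Suc_right)
qed

lemma holomorphic_inverse_branch:
  assumes "Q holomorphic_on W" "open W" "bij_betw Q W U"
  obtains \<psi> where "\<psi> holomorphic_on U" "\<psi> ` U \<subseteq> W"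
    "\<And>y. y \<in> U \<Longrightarrow> Q (\<psi> y) = y" "\<And>y. y \<in> U \<Longrightarrow> deriv Q (\<psi> y) * deriv \<psi> y = 1"
proof -
  have inj: "inj_on Q W" and img: "Q ` W = U"
    using assms(3) by (simp_all add: bij_betw_def)
  obtain \<psi> where \<psi>: "\<psi> holomorphic_on Q ` W"
    "\<And>z. z \<in> W \<Longrightarrow> deriv Q z * deriv \<psi> (Q z) = 1" "\<And>z. z \<in> W \<Longrightarrow> \<psi> (Q z) = z"
    using holomorphic_has_inverse[OF assms(1,2) inj] by blast
  show ?thesis
  proof
    show "\<psi> holomorphic_on U" using \<psi>(1) img by simp
    show "\<psi> ` U \<subseteq> W" using \<psi>(3) img by auto
    show "Q (\<psi> y) = y" "deriv Q (\<psi> y) * deriv \<psi> y = 1" if "y \<in> U" for y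
      using that img \<psi>(2,3) by auto
  qed
qed

lemma holomorphic_inverse_branches:
  assumes "Q holomorphic_on UNIV" "\<And>k. k \<in> I \<Longrightarrow> open (W k)" "\<And>k. k \<in> I \<Longrightarrow> bij_betw Q (W k) (U k)"
  obtains \<psi> where "\<And>k. k \<in> I \<Longrightarrow> \<psi> k holomorphic_on U k" "\<And>k. k \<in> I \<Longrightarrow> \<psi> k ` U k \<subseteq> W k"
    "\<And>k y. k \<in> I \<Longrightarrow> y \<in> U k \<Longrightarrow> Q (\<psi> k y) = y"
    "\<And>k y. k \<in> I \<Longrightarrow> y \<in> U k \<Longrightarrow> deriv Q (\<psi> k y) * deriv (\<psi> k) y = 1"
proof -
  have "\<forall>k\<in>I. \<exists>\<psi>. \<psi> holomorphic_on U k \<and> \<psi> ` U k \<subseteq> W k \<and> (\<forall>y\<in>U k. Q (\<psi> y) = y)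
      \<and> (\<forall>y\<in>U k. deriv Q (\<psi> y) * deriv \<psi> y = 1)"
  proof
    fix k assume k: "k \<in> I"
    show "\<exists>\<psi>. \<psi> holomorphic_on U k \<and> \<psi> ` U k \<subseteq> W k \<and> (\<forall>y\<in>U k. Q (\<psi> y) = y)
      \<and> (\<forall>y\<in>U k. deriv Q (\<psi> y) * deriv \<psi> y = 1)"
    proof (rule holomorphic_inverse_branch[OF holomorphic_on_subset[OF assms(1)] assms(2,3)[OF k]])
      fix \<psi> assume "\<psi> holomorphic_on U k" "\<psi> ` U k \<subseteq> W k" "\<And>y. y \<in> U k \<Longrightarrow> Q (\<psi> y) = y"
        "\<And>y. y \<in> U k \<Longrightarrow> deriv Q (\<psi> y) * deriv \<psi> y = 1"
      then show ?thesis by blast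
    qed simp
  qed
  then obtain \<psi> where \<psi>: "\<forall>k\<in>I. \<psi> k holomorphic_on U k \<and> \<psi> k ` U k \<subseteq> W k
      \<and> (\<forall>y\<in>U k. Q (\<psi> k y) = y) \<and> (\<forall>y\<in>U k. deriv Q (\<psi> k y) * deriv (\<psi> k) y = 1)"
    by (rule bchoice[THEN exE])
  show thesis
  proof (rule that)
    show "\<psi> k holomorphic_on U k" "\<psi> k ` U k \<subseteq> W k" if "k \<in> I" for k
      using \<psi> that by blast+
    show "Q (\<psi> k y) = y" "deriv Q (\<psi> k y) * deriv (\<psi> k) y = 1" if "k \<in> I" "y \<in> U k" for k y
      using \<psi> that by blast+
  qed
qed

lemma norm_fst_le_norm: "norm (fst z) \<le> norm z"
  and norm_snd_le_norm: "norm (snd z) \<le> norm z"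
  using norm_fst_le[of "fst z" "snd z"] norm_snd_le[of "snd z" "fst z"] by simp_all

lemma holomorphic2_on_frechet_derivative:
  assumes "holomorphic2_on f Z" "x \<in> Z"
  shows "(f has_derivative frechet_derivative f (at x)) (at x)"
    "\<forall>c v. frechet_derivative f (at x) (cmul2 c v) = cmul2 c (frechet_derivative f (at x) v)"
proof -
  obtain D where D: "(f has_derivative D) (at x)" "\<forall>c v. D (cmul2 c v) = cmul2 c (D v)"
    using assms unfolding holomorphic2_on_def by blast
  with frechet_derivative_at[OF D(1)] show "(f has_derivative frechet_derivative f (at x)) (at x)"
    "\<forall>c v. frechet_derivative f (at x) (cmul2 c v) = cmul2 c (frechet_derivative f (at x) v)"
    by simp_all
qed

lemma holomorphic2_on_imp_continuous_on:
  assumes "holomorphic2_on f Z" shows "continuous_on Z f"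
  using assms unfolding holomorphic2_on_def
  by (meson continuous_at_imp_continuous_on has_derivative_continuous)

lemma has_field_derivative_holomorphic2_along_curve:
  fixes f :: "complex \<times> complex \<Rightarrow> complex \<times> complex"
  assumes "(f has_derivative Df) (at (a y, b y))"
    and "\<forall>c v. Df (cmul2 c v) = cmul2 c (Df v)"
    and "(a has_field_derivative a') (at y)" and "(b has_field_derivative b') (at y)"
  shows "((\<lambda>y. fst (f (a y, b y))) has_field_derivative fst (Df (a', b'))) (at y)"
    and "((\<lambda>y. snd (f (a y, b y))) has_field_derivative snd (Df (a', b'))) (at y)"
proof -
  have curve: "((\<lambda>y. (a y, b y)) has_derivative (\<lambda>h. cmul2 h (a', b'))) (at y)"
    using has_derivative_Pair[OF assms(3,4)[unfolded has_field_derivative_def]]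
    by (simp add: cmul2_def mult.commute)
  have "((\<lambda>y. f (a y, b y)) has_derivative (\<lambda>h. cmul2 h (Df (a', b')))) (at y)"
    using has_derivative_compose[OF curve assms(1)] assms(2) by (simp add: o_def)
  from has_derivative_fst[OF this] has_derivative_snd[OF this] show
    "((\<lambda>y. fst (f (a y, b y))) has_field_derivative fst (Df (a', b'))) (at y)"
    "((\<lambda>y. snd (f (a y, b y))) has_field_derivative snd (Df (a', b'))) (at y)"
    unfolding has_field_derivative_def by (simp_all add: cmul2_def mult_commute_abs)
qed

lemma snd_derivative_of_skew_product:
  fixes g :: "complex \<times> complex \<Rightarrow> complex \<times> complex"
  assumes "open Z" "x \<in> Z" "(g has_derivative Dg) (at x)"
    and "\<And>z. z \<in> Z \<Longrightarrow> snd (g z) = Q (snd z)"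
    and "(Q has_field_derivative Q') (at (snd x))"
  shows "snd (Dg w) = Q' * snd w"
proof -
  have "((\<lambda>z. Q (snd z)) has_derivative (\<lambda>w. Q' * snd w)) (at x)"
    using has_derivative_compose[OF has_derivative_snd[OF has_derivative_ident]
        assms(5)[unfolded has_field_derivative_def]]
    by (simp add: o_def)
  then have "((\<lambda>z. snd (g z)) has_derivative (\<lambda>w. Q' * snd w)) (at x)"
    by (rule has_derivative_transform_within_open[OF _ assms(1,2)]) (simp add: assms(4))
  from has_derivative_unique[OF has_derivative_snd[OF assms(3)] this] show ?thesis by metis
qed

lemma Lambda_set_if_orbit_in:
  assumes "\<And>n. (f ^^ n) x \<in> Z" shows "x \<in> Lambda_set f Z"
proof -
  have "x \<in> iter_preimage f Z n (closure Z)" if "\<And>t. (f ^^ t) x \<in> Z" for n x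
    using that
  proof (induction n arbitrary: x)
    case 0 then show ?case using closure_subset by (metis funpow_0 iter_preimage.simps(1) subsetD)
  next
    case (Suc n)
    have "f x \<in> iter_preimage f Z n (closure Z)"
      using Suc.IH[of "f x"] Suc.prems[of "Suc _"] by (simp add: funpow_Suc_right del: funpow.simps)
    then show ?case using Suc.prems[of 0] by simp
  qed
  then show ?thesis using assms by (simp add: Lambda_set_def)
qed

lemma connected_open_variation_bound:
  fixes S :: "complex set"
  assumes "open S" "connected S" "a \<in> S" "b \<in> S"
  obtains L where "L \<ge> 0" "\<And>A M. A holomorphic_on S \<Longrightarrow> (\<forall>z\<in>S. norm (deriv A z) \<le> M)
            \<Longrightarrow> norm (A b - A a) \<le> M * L"
proof -
  obtain \<gamma> where \<gamma>: "polynomial_function \<gamma>" "path_image \<gamma> \<subseteq> S" "pathstart \<gamma> = a" "pathfinish \<gamma> = b"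
    using connected_open_polynomial_connected[OF assms] by blast
  obtain \<gamma>' where \<gamma>': "polynomial_function \<gamma>'" "\<And>x. (\<gamma> has_vector_derivative (\<gamma>' x)) (at x)"
    using has_vector_derivative_polynomial_function[OF \<gamma>(1)] by blast
  have "bounded (\<gamma>' ` {0..1})"
    by (intro compact_imp_bounded compact_continuous_image continuous_on_polymonial_function \<gamma>'(1)) simp
  then obtain B where "B > 0" "\<forall>x\<in>\<gamma>' ` {0..1}. norm x \<le> B"
    using bounded_pos by blast
  then have B: "B \<ge> 0" "\<And>t. t \<in> {0..1} \<Longrightarrow> norm (\<gamma>' t) \<le> B" by auto
  have \<gamma>S: "\<gamma> t \<in> S" if "t \<in> {0..1}" for t
    using \<gamma>(2) that by (auto simp: path_image_def)
  show ?thesis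
  proof (rule that[OF B(1)])
    fix A M
    assume A: "A holomorphic_on S" and M: "\<forall>z\<in>S. norm (deriv A z) \<le> M"
    have d: "((A \<circ> \<gamma>) has_derivative (\<lambda>h. h *\<^sub>R (\<gamma>' t * deriv A (\<gamma> t)))) (at t within {0..1})"
      if "t \<in> {0..1}" for t
      using field_vector_diff_chain_at[OF \<gamma>'(2) holomorphic_derivI[OF A assms(1) \<gamma>S[OF that]]]
      unfolding has_vector_derivative_def by (rule has_derivative_at_withinI)
    have on: "onorm (\<lambda>h::real. h *\<^sub>R (\<gamma>' t * deriv A (\<gamma> t))) \<le> B * M" if "t \<in> {0..1}" for t
    proof -
      have "onorm (\<lambda>h::real. h *\<^sub>R (\<gamma>' t * deriv A (\<gamma> t))) = norm (\<gamma>' t) * norm (deriv A (\<gamma> t))"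
        using onorm_scaleR_left[OF bounded_linear_ident, of "\<gamma>' t * deriv A (\<gamma> t)"]
        by (simp add: onorm_id norm_mult)
      also have "\<dots> \<le> B * M"
        by (rule mult_mono) (use B that M \<gamma>S in auto)
      finally show ?thesis .
    qed
    have "norm ((A \<circ> \<gamma>) 1 - (A \<circ> \<gamma>) 0) \<le> (B * M) * norm (1 - (0::real))"
      by (rule differentiable_bound[OF convex_real_interval(5) d on]) auto
    then show "norm (A b - A a) \<le> M * B"
      using \<gamma>(3,4) by (simp add: pathstart_def pathfinish_def mult.commute)
  qed
qed

lemma uniform_variation_bound:
  fixes U :: "'i \<Rightarrow> complex set"
  assumes "finite I" "\<And>k. k \<in> I \<Longrightarrow> open (U k)" "\<And>k. k \<in> I \<Longrightarrow> connected (U k)"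
    and "\<And>j k. j \<in> I \<Longrightarrow> k \<in> I \<Longrightarrow> r j \<in> U k"
  obtains L where "L \<ge> 0" "\<And>k A M j. k \<in> I \<Longrightarrow> A holomorphic_on U k \<Longrightarrow>
      (\<forall>z\<in>U k. norm (deriv A z) \<le> M) \<Longrightarrow> j \<in> I \<Longrightarrow> norm (A (r j) - A (r k)) \<le> M * L"
proof -
  have "\<exists>L\<ge>0. \<forall>A M. A holomorphic_on U (snd x) \<longrightarrow>
      (\<forall>z\<in>U (snd x). norm (deriv A z) \<le> M) \<longrightarrow> norm (A (r (fst x)) - A (r (snd x))) \<le> M * L"
    if "x \<in> I \<times> I" for x
  proof -
    from that have j: "fst x \<in> I" and k: "snd x \<in> I" by auto
    obtain L where "L \<ge> 0" "\<And>A M. A holomorphic_on U (snd x) \<Longrightarrow> (\<forall>z\<in>U (snd x). norm (deriv A z) \<le> M)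
        \<Longrightarrow> norm (A (r (fst x)) - A (r (snd x))) \<le> M * L"
      using connected_open_variation_bound[OF assms(2,3)[OF k] assms(4)[OF k k] assms(4)[OF j k]] by blast
    then show ?thesis by blast
  qed
  then obtain L where "\<forall>x\<in>I \<times> I. L x \<ge> 0 \<and> (\<forall>A M. A holomorphic_on U (snd x) \<longrightarrow>
      (\<forall>z\<in>U (snd x). norm (deriv A z) \<le> M) \<longrightarrow> norm (A (r (fst x)) - A (r (snd x))) \<le> M * L x)"
    by (rule bchoice[rule_format, THEN exE]) blast
  then have L: "\<And>x. x \<in> I \<times> I \<Longrightarrow> L x \<ge> 0"
    "\<And>x A M. x \<in> I \<times> I \<Longrightarrow> A holomorphic_on U (snd x) \<Longrightarrow> (\<forall>z\<in>U (snd x). norm (deriv A z) \<le> M)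
       \<Longrightarrow> norm (A (r (fst x)) - A (r (snd x))) \<le> M * L x"
    by blast+
  show ?thesis
  proof (rule that[of "sum L (I \<times> I)"])
    show "sum L (I \<times> I) \<ge> 0" by (rule sum_nonneg) (use L(1) in blast)
    fix k A M j assume k: "k \<in> I" and A: "A holomorphic_on U k"
      and M: "\<forall>z\<in>U k. norm (deriv A z) \<le> M" and j: "j \<in> I"
    have "0 \<le> M" using M assms(4)[OF k k] norm_ge_zero order_trans by blast
    have "norm (A (r j) - A (r k)) \<le> M * L (j, k)" using L(2)[of "(j, k)"] j k A M by simp
    also have "\<dots> \<le> M * sum L (I \<times> I)"
      using j k L(1) assms(1) \<open>0 \<le> M\<close> by (intro mult_left_mono member_le_sum) auto
    finally show "norm (A (r j) - A (r k)) \<le> M * sum L (I \<times> I)" .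
  qed
qed

lemma uniform_cball_in_open_sets:
  assumes "finite I" "\<And>k. k \<in> I \<Longrightarrow> open (U k)" "\<And>j k. j \<in> I \<Longrightarrow> k \<in> I \<Longrightarrow> r j \<in> U k"
  obtains R :: real where "R > 0" "\<And>j k. j \<in> I \<Longrightarrow> k \<in> I \<Longrightarrow> cball (r j) R \<subseteq> U k"
proof -
  have "\<exists>e>0. cball (r j) e \<subseteq> (\<Inter>k\<in>I. U k)" if "j \<in> I" for j
  proof -
    have "open (\<Inter>k\<in>I. U k)" using assms(1,2) by (intro open_INT) auto
    moreover have "r j \<in> (\<Inter>k\<in>I. U k)" using assms(3) that by blast
    ultimately show ?thesis by (simp add: open_contains_cball)
  qed
  then obtain e where e: "\<forall>j\<in>I. e j > 0 \<and> cball (r j) (e j) \<subseteq> (\<Inter>k\<in>I. U k)"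
    by (rule bchoice[rule_format, THEN exE]) blast
  show ?thesis
  proof (cases "I = {}")
    case True then show ?thesis using that[of 1] by simp
  next
    case False
    show ?thesis
    proof (rule that[of "Min (e ` I)"])
      show "Min (e ` I) > 0" using e assms(1) False by simp
      show "cball (r j) (Min (e ` I)) \<subseteq> U k" if "j \<in> I" "k \<in> I" for j k
      proof -
        have "Min (e ` I) \<le> e j" using assms(1) that(1) by simp
        then have "cball (r j) (Min (e ` I)) \<subseteq> cball (r j) (e j)" by (rule subset_cball)
        also have "\<dots> \<subseteq> U k" using e that by blast
        finally show ?thesis .
      qed
    qed
  qed
qed

lemma near_identity_lipschitz:
  fixes \<phi> :: "complex \<Rightarrow> complex"
  assumes "\<phi> holomorphic_on ball c \<rho>" "\<And>y. y \<in> ball c \<rho> \<Longrightarrow> norm (deriv \<phi> y - 1) \<le> 1/2"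
    and "x \<in> ball c \<rho>" "y \<in> ball c \<rho>"
  shows "norm ((\<phi> x - x) - (\<phi> y - y)) \<le> 1/2 * norm (x - y)"
proof -
  have "((\<lambda>y. \<phi> y - y) has_field_derivative (deriv \<phi> z - 1)) (at z within ball c \<rho>)"
    if "z \<in> ball c \<rho>" for z
  proof -
    have "(\<phi> has_field_derivative deriv \<phi> z) (at z)"
      by (rule holomorphic_derivI[OF assms(1) open_ball that])
    then have "((\<lambda>y. \<phi> y - y) has_field_derivative (deriv \<phi> z - 1)) (at z)"
      by (auto intro!: derivative_eq_intros)
    then show ?thesis by (rule has_field_derivative_at_within)
  qed
  from field_differentiable_bound[OF convex_ball this assms(2) assms(3,4)] show ?thesis by simp
qed

lemma near_identity_preimage:
  fixes \<phi> :: "complex \<Rightarrow> complex"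
  assumes "\<phi> holomorphic_on ball c (2*R)" "\<And>y. y \<in> ball c (2*R) \<Longrightarrow> norm (deriv \<phi> y - 1) \<le> 1/2"
    and close: "\<And>y. y \<in> ball c (2*R) \<Longrightarrow> norm (\<phi> y - y) \<le> \<alpha>"
    and "0 \<le> \<alpha>" "\<alpha> < R" "t \<in> ball c R"
  shows "\<exists>y\<in>cball t \<alpha>. \<phi> y = t"
proof -
  have sub: "cball t \<alpha> \<subseteq> ball c (2*R)"
  proof
    fix y assume "y \<in> cball t \<alpha>"
    then have "dist c y \<le> dist c t + dist t y" "dist t y \<le> \<alpha>" "dist c t < R"
      using assms(6) dist_triangle by (auto simp: mem_cball)
    then show "y \<in> ball c (2*R)" using assms(5) by simp
  qed
  define T where "T y = t - (\<phi> y - y)" for y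
  have "\<exists>!y\<in>cball t \<alpha>. T y = y"
  proof (rule Banach_fix)
    show "complete (cball t \<alpha>)" by (simp add: complete_eq_closed)
    show "cball t \<alpha> \<noteq> {}" using assms(4) by simp
    show "T ` cball t \<alpha> \<subseteq> cball t \<alpha>"
    proof (rule image_subsetI)
      fix y assume "y \<in> cball t \<alpha>"
      then have "norm (\<phi> y - y) \<le> \<alpha>" using close subsetD[OF sub] by simp
      then show "T y \<in> cball t \<alpha>" by (simp add: T_def dist_norm)
    qed
    show "dist (T x) (T y) \<le> 1/2 * dist x y" if "x \<in> cball t \<alpha>" "y \<in> cball t \<alpha>" for x y
    proof -
      have "dist (T x) (T y) = norm ((\<phi> x - x) - (\<phi> y - y))"
      proof -
        have "T x - T y = - ((\<phi> x - x) - (\<phi> y - y))" by (simp add: T_def)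
        then show ?thesis by (simp only: dist_norm norm_minus_cancel)
      qed
      also have "\<dots> \<le> 1/2 * dist x y"
      proof -
        have "x \<in> ball c (2*R)" "y \<in> ball c (2*R)" using sub that by blast+
        from near_identity_lipschitz[OF assms(1,2) this] show ?thesis by (simp add: dist_norm)
      qed
      finally show ?thesis .
    qed
  qed simp_all
  then obtain y where "y \<in> cball t \<alpha>" "T y = y" by blast
  then show ?thesis by (intro bexI[of _ y]) (simp_all add: T_def)
qed

lemma near_identity_holomorphic_inverse:
  fixes \<phi> :: "complex \<Rightarrow> complex"
  assumes holo: "\<phi> holomorphic_on ball c (2*R)"
    and der: "\<And>y. y \<in> ball c (2*R) \<Longrightarrow> norm (deriv \<phi> y - 1) \<le> 1/2"
    and close: "\<And>y. y \<in> ball c (2*R) \<Longrightarrow> norm (\<phi> y - y) \<le> \<alpha>"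
    and "0 \<le> \<alpha>" "\<alpha> < R"
  obtains \<omega> where "\<omega> holomorphic_on ball c R"
    "\<And>t. t \<in> ball c R \<Longrightarrow> \<omega> t \<in> cball t \<alpha> \<and> \<omega> t \<in> ball c (2*R) \<and> \<phi> (\<omega> t) = t
        \<and> deriv \<phi> (\<omega> t) * deriv \<omega> t = 1"
proof -
  have "inj_on \<phi> (ball c (2*R))"
  proof (rule inj_onI)
    fix x y assume xy: "x \<in> ball c (2*R)" "y \<in> ball c (2*R)" "\<phi> x = \<phi> y"
    have "(\<phi> x - x) - (\<phi> y - y) = -(x - y)" using xy(3) by simp
    then have "norm (x - y) \<le> 1/2 * norm (x - y)"
      using near_identity_lipschitz[OF holo der xy(1,2)] by (simp add: norm_minus_commute)
    then show "x = y" by simp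
  qed
  then obtain \<omega> where \<omega>: "\<omega> holomorphic_on \<phi> ` ball c (2*R)"
    "\<And>z. z \<in> ball c (2*R) \<Longrightarrow> deriv \<phi> z * deriv \<omega> (\<phi> z) = 1"
    "\<And>z. z \<in> ball c (2*R) \<Longrightarrow> \<omega> (\<phi> z) = z"
    using holomorphic_has_inverse[OF holo open_ball] by blast
  have pre: "\<exists>y\<in>cball t \<alpha>. y \<in> ball c (2*R) \<and> \<phi> y = t" if t: "t \<in> ball c R" for t
  proof -
    obtain y where y: "y \<in> cball t \<alpha>" "\<phi> y = t"
      using near_identity_preimage[OF holo der close assms(4,5) t] by blast
    have "dist c y \<le> dist c t + dist t y" by (rule dist_triangle)
    then have "y \<in> ball c (2*R)" using y(1) t assms(5) by (simp add: mem_cball)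
    then show ?thesis using y by blast
  qed
  show ?thesis
  proof
    have "ball c R \<subseteq> \<phi> ` ball c (2*R)" using pre by blast
    then show "\<omega> holomorphic_on ball c R" by (rule holomorphic_on_subset[OF \<omega>(1)])
    show "\<omega> t \<in> cball t \<alpha> \<and> \<omega> t \<in> ball c (2*R) \<and> \<phi> (\<omega> t) = t \<and> deriv \<phi> (\<omega> t) * deriv \<omega> t = 1"
      if "t \<in> ball c R" for t
      using pre[OF that] \<omega>(2,3) by auto
  qed
qed

lemma orbit_through_compact_covers:
  fixes f :: "'a::heine_borel \<Rightarrow> 'a"
  assumes compact: "\<And>n. compact (\<Gamma> n)" and nonempty: "\<And>n. \<Gamma> n \<noteq> {}"
    and "\<And>n. \<Gamma> n \<subseteq> Z" "continuous_on Z f" and cover: "\<And>n. \<Gamma> (Suc n) \<subseteq> f ` \<Gamma> n"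
  shows "\<exists>x\<in>\<Gamma> 0. \<forall>n. (f ^^ n) x \<in> \<Gamma> n"
proof -
  define F where "F n = {x \<in> \<Gamma> 0. \<forall>t\<le>n. (f ^^ t) x \<in> \<Gamma> t}" for n
  have reach: "\<forall>y\<in>\<Gamma> n. \<exists>x\<in>F n. (f ^^ n) x = y" for n
  proof (induction n)
    case 0 then show ?case by (auto simp: F_def)
  next
    case (Suc n)
    show ?case
    proof
      fix y assume "y \<in> \<Gamma> (Suc n)"
      then obtain y0 where "y0 \<in> \<Gamma> n" "f y0 = y" using cover by blast
      then obtain x where "x \<in> F n" "(f ^^ n) x = y0" using Suc.IH by blast
      then show "\<exists>x\<in>F (Suc n). (f ^^ Suc n) x = y"
        using \<open>f y0 = y\<close> \<open>y \<in> \<Gamma> (Suc n)\<close> by (auto simp: F_def le_Suc_eq)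
    qed
  qed
  have "compact (F n) \<and> continuous_on (F n) (f ^^ n)" for n
  proof (induction n)
    case 0
    have "F 0 = \<Gamma> 0" by (auto simp: F_def)
    then show ?case using compact by (simp add: continuous_on_id)
  next
    case (Suc n)
    have "(f ^^ n) ` F n \<subseteq> Z" using assms(3) by (auto simp: F_def)
    then have cont: "continuous_on (F n) (f \<circ> (f ^^ n))"
      using continuous_on_compose[OF conjunct2[OF Suc.IH]] continuous_on_subset[OF assms(4)] by blast
    have eq: "F (Suc n) = F n \<inter> (f \<circ> (f ^^ n)) -` \<Gamma> (Suc n)"
      by (auto simp: F_def le_Suc_eq)
    have "closed (F (Suc n))" unfolding eq
      using continuous_closed_preimage[OF cont] Suc.IH compact by (simp add: compact_imp_closed)
    moreover have "F (Suc n) \<subseteq> \<Gamma> 0" by (auto simp: F_def)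
    ultimately have "compact (F (Suc n))"
      using closed_Int_compact[OF _ compact] by (metis inf.absorb1)
    moreover have "continuous_on (F (Suc n)) (f ^^ Suc n)"
    proof -
      have "F (Suc n) \<subseteq> F n" using eq by blast
      then show ?thesis unfolding funpow.simps(2) by (rule continuous_on_subset[OF cont])
    qed
    ultimately show ?case by blast
  qed
  moreover have "F n \<noteq> {}" for n using reach nonempty by blast
  moreover have "F n \<subseteq> F m" if "m \<le> n" for m n using that by (auto simp: F_def)
  ultimately have "\<Inter> (range F) \<noteq> {}" by (intro compact_nest) auto
  then show ?thesis by (auto simp: F_def)
qed

lemma perturbed_tangent_estimates:
  fixes Df Dg :: "complex \<times> complex \<Rightarrow> complex \<times> complex"
  assumes "bounded_linear Df" "bounded_linear Dg" "onorm (\<lambda>w. Df w - Dg w) \<le> \<alpha>"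
    and "norm v \<le> 2" "Dg v \<in> cone \<delta>'" "snd (Dg v) = 1"
  shows "norm (fst (Df v)) \<le> \<delta>' + 2*\<alpha>" "norm (snd (Df v) - 1) \<le> 2*\<alpha>"
proof -
  have bl: "bounded_linear (\<lambda>w. Df w - Dg w)" using assms(1,2) by (rule bounded_linear_sub)
  then have "norm (Df v - Dg v) \<le> onorm (\<lambda>w. Df w - Dg w) * norm v" by (rule onorm)
  also have "\<dots> \<le> \<alpha> * 2"
    using assms(3,4) onorm_pos_le[OF bl] by (intro mult_mono) auto
  finally have diff: "norm (Df v - Dg v) \<le> 2*\<alpha>" by simp
  have "norm (fst (Dg v)) < \<delta>'" using assms(5,6) by (cases "Dg v") (simp add: cone_def)
  moreover have "norm (fst (Df v)) \<le> norm (fst (Dg v)) + norm (fst (Df v - Dg v))"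
    using norm_triangle_ineq[of "fst (Dg v)" "fst (Df v - Dg v)"] by simp
  moreover have "norm (fst (Df v - Dg v)) \<le> 2*\<alpha>"
    using diff norm_fst_le_norm[of "Df v - Dg v"] by linarith
  ultimately show "norm (fst (Df v)) \<le> \<delta>' + 2*\<alpha>" by linarith
  show "norm (snd (Df v) - 1) \<le> 2*\<alpha>"
  proof -
    have "norm (snd (Df v - Dg v)) \<le> 2*\<alpha>"
      using diff norm_snd_le_norm[of "Df v - Dg v"] by linarith
    then show ?thesis using assms(6) by simp
  qed
qed

lemma graph_tangent_in_cone:
  fixes a b :: complex
  assumes "norm a < \<delta>" "b \<noteq> 0" "norm b \<le> 1" "\<delta> \<le> 1"
  shows "(a * b, b) \<in> cone \<delta>" "norm (a * b, b) \<le> 2"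
proof -
  show "(a * b, b) \<in> cone \<delta>"
    using mult_strict_right_mono[OF assms(1), of "norm b"] assms(2) by (simp add: cone_def norm_mult)
  have "norm (a * b, b) \<le> norm a * norm b + norm b" using norm_Pair_le by (metis norm_mult)
  also have "\<dots> \<le> 1 * 1 + 1" using assms by (intro add_mono mult_mono) auto
  finally show "norm (a * b, b) \<le> 2" by simp
qed

lemma slope_quotient_bound:
  fixes a b :: complex
  assumes "norm a \<le> \<delta>' + 2*\<alpha>" "norm (b - 1) \<le> 2*\<alpha>"
    and "0 < \<alpha>" "\<alpha> \<le> 1/4" "8*\<alpha> \<le> \<delta> - \<delta>'" "\<delta> \<le> 1"
  shows "norm (a / b) < \<delta>"
proof -
  have b: "norm b \<ge> 1 - 2*\<alpha>"
    using assms(2) norm_triangle_ineq2[of 1 b] by (simp add: norm_minus_commute)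
  have "norm a < \<delta> * (1 - 2*\<alpha>)"
  proof -
    have "\<alpha> * \<delta> \<le> \<alpha>" using assms(3,6) by (intro mult_left_le) auto
    moreover have "\<delta> * (1 - 2*\<alpha>) = \<delta> - 2 * (\<alpha> * \<delta>)" by (simp add: algebra_simps)
    ultimately show ?thesis using assms(1,3,5) by linarith
  qed
  also have "\<dots> \<le> \<delta> * norm b"
  proof (rule mult_left_mono[OF b])
    show "0 \<le> \<delta>" using assms(1,3,5) norm_ge_zero[of a] by linarith
  qed
  finally have "norm a < \<delta> * norm b" .
  moreover have "norm b > 0" using b assms(4) by linarith
  ultimately show ?thesis by (simp add: norm_divide divide_less_eq)
qed

section \<open>The graph transform\<close>

text \<open>
  One level \<open>l\<close> of the construction: \<open>W k = V\<^sub>k\<^sup>l\<close>, \<open>U k = V\<^sub>k\<^sup>0\<close>, \<open>Q = q\<^sup>l\<^sup>m\<^sup>1\<close> and \<open>\<psi> k\<close> is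
  the branch of \<open>Q\<^sup>-\<^sup>1\<close> from \<open>U k\<close> onto \<open>W k\<close>. The constants \<open>R\<close>, \<open>L\<close> (path length between
  the centres inside each \<open>U k\<close>) and \<open>e\<close> (Lebesgue number of the cover of \<open>K\<close>) do not
  depend on \<open>l\<close>; \<open>\<alpha>\<close> is the \<open>C\<^sup>1\<close> distance from \<open>f\<close> to \<open>g\<close>.
\<close>

locale graph_transform =
  fixes I :: "'i set" and H W U :: "'i \<Rightarrow> complex set" and r :: "'i \<Rightarrow> complex"
    and Q :: "complex \<Rightarrow> complex" and \<psi> :: "'i \<Rightarrow> complex \<Rightarrow> complex"
    and Z :: "(complex \<times> complex) set" and K :: "complex set"
    and f g :: "complex \<times> complex \<Rightarrow> complex \<times> complex"
    and R L e \<delta> \<delta>' \<alpha> :: real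
  assumes open_Z: "open Z" and open_W: "\<And>k. k \<in> I \<Longrightarrow> open (W k)"
    and open_U: "\<And>k. k \<in> I \<Longrightarrow> open (U k)"
    and H_times_W_sub: "\<And>k. k \<in> I \<Longrightarrow> H k \<times> W k \<subseteq> Z"
    and Q_holomorphic: "Q holomorphic_on UNIV"
    and Q_expanding: "\<And>k u. k \<in> I \<Longrightarrow> u \<in> W k \<Longrightarrow> norm (deriv Q u) \<ge> 1"
    and \<psi>_holomorphic: "\<And>k. k \<in> I \<Longrightarrow> \<psi> k holomorphic_on U k"
    and \<psi>_maps: "\<And>k. k \<in> I \<Longrightarrow> \<psi> k ` U k \<subseteq> W k"
    and Q_\<psi>: "\<And>k y. k \<in> I \<Longrightarrow> y \<in> U k \<Longrightarrow> Q (\<psi> k y) = y"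
    and deriv_Q_\<psi>: "\<And>k y. k \<in> I \<Longrightarrow> y \<in> U k \<Longrightarrow> deriv Q (\<psi> k y) * deriv (\<psi> k) y = 1"
    and f_holomorphic: "holomorphic2_on f Z" and g_holomorphic: "holomorphic2_on g Z"
    and g_skew: "\<And>x. x \<in> Z \<Longrightarrow> fst (g x) \<in> K \<and> snd (g x) = Q (snd x)"
    and g_cone: "\<And>x v. x \<in> Z \<Longrightarrow> v \<in> cone \<delta> \<Longrightarrow> frechet_derivative g (at x) v \<in> cone \<delta>'"
    and f_close: "C1_close Z f g \<alpha>"
    and cball_sub_U: "\<And>j k. j \<in> I \<Longrightarrow> k \<in> I \<Longrightarrow> cball (r j) (2*R) \<subseteq> U k"
    and W_sub_ball: "\<And>j. j \<in> I \<Longrightarrow> W j \<subseteq> ball (r j) R"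
    and variation: "\<And>k A M j. k \<in> I \<Longrightarrow> A holomorphic_on U k \<Longrightarrow>
          (\<forall>z\<in>U k. norm (deriv A z) \<le> M) \<Longrightarrow> j \<in> I \<Longrightarrow> norm (A (r j) - A (r k)) \<le> M * L"
    and lebesgue: "\<And>p. p \<in> K \<Longrightarrow> \<exists>j\<in>I. ball p e \<subseteq> H j"
    and constants: "0 < \<delta>'" "\<delta>' < \<delta>" "\<delta> \<le> 1" "0 < \<alpha>" "\<alpha> \<le> 1/4" "8*\<alpha> \<le> \<delta> - \<delta>'"
      "\<alpha> < R" "\<delta> * (2*R + L) + \<alpha> < e"
begin

definition admissible_graph :: "'i \<Rightarrow> (complex \<Rightarrow> complex) \<Rightarrow> bool" where
  "admissible_graph k s \<longleftrightarrow> k \<in> I \<and> s holomorphic_on W k \<and> s ` W k \<subseteq> H k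
     \<and> (\<forall>u\<in>W k. norm (deriv s u) < \<delta>)"

text \<open>
  Parametrising a graph over \<open>W k\<close> by \<open>y = Q w\<close>, its image under \<open>f\<close> is the curve
  \<open>y \<mapsto> f (lift k s y)\<close>; its second coordinate is within \<open>\<alpha>\<close> of \<open>y\<close> because \<open>g\<close> is fibred over \<open>Q\<close>.
\<close>

definition lift :: "'i \<Rightarrow> (complex \<Rightarrow> complex) \<Rightarrow> complex \<Rightarrow> complex \<times> complex" where
  "lift k s y = (s (\<psi> k y), \<psi> k y)"

lemma R_pos: "R > 0"
  using constants(4,7) by linarith

lemma r_in_U: "j \<in> I \<Longrightarrow> k \<in> I \<Longrightarrow> r j \<in> U k"
  using cball_sub_U R_pos by fastforce

lemma lift_in_Z:
  assumes "admissible_graph k s" "y \<in> U k" shows "lift k s y \<in> Z"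
  using assms \<psi>_maps H_times_W_sub unfolding admissible_graph_def lift_def by blast

lemma deriv_\<psi>_bound:
  assumes "k \<in> I" "y \<in> U k" shows "deriv (\<psi> k) y \<noteq> 0" "norm (deriv (\<psi> k) y) \<le> 1"
proof -
  have inv: "deriv Q (\<psi> k y) * deriv (\<psi> k) y = 1" by (rule deriv_Q_\<psi>[OF assms])
  then show "deriv (\<psi> k) y \<noteq> 0" by auto
  have "1 \<le> norm (deriv Q (\<psi> k y))" using Q_expanding assms \<psi>_maps by blast
  then have "norm (deriv (\<psi> k) y) \<le> norm (deriv Q (\<psi> k y)) * norm (deriv (\<psi> k) y)"
    using mult_right_mono[of 1 _ "norm (deriv (\<psi> k) y)"] by simp
  then show "norm (deriv (\<psi> k) y) \<le> 1" using inv by (metis norm_mult norm_one)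
qed

definition tangent :: "'i \<Rightarrow> (complex \<Rightarrow> complex) \<Rightarrow> complex \<Rightarrow> complex \<times> complex" where
  "tangent k s y = (deriv s (\<psi> k y) * deriv (\<psi> k) y, deriv (\<psi> k) y)"

lemma lift_tangent:
  assumes graph: "admissible_graph k s" and y: "y \<in> U k"
  shows "((\<lambda>y. s (\<psi> k y)) has_field_derivative fst (tangent k s y)) (at y)"
    "(\<psi> k has_field_derivative snd (tangent k s y)) (at y)"
    "tangent k s y \<in> cone \<delta>" "norm (tangent k s y) \<le> 2" "deriv Q (\<psi> k y) * snd (tangent k s y) = 1"
proof -
  have k: "k \<in> I" and s: "s holomorphic_on W k" "\<forall>u\<in>W k. norm (deriv s u) < \<delta>"
    using graph by (auto simp: admissible_graph_def)
  have \<psi>y: "\<psi> k y \<in> W k" using \<psi>_maps[OF k] y by blast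
  show d\<psi>: "(\<psi> k has_field_derivative snd (tangent k s y)) (at y)"
    unfolding tangent_def by (simp add: holomorphic_derivI[OF \<psi>_holomorphic[OF k] open_U[OF k] y])
  show "((\<lambda>y. s (\<psi> k y)) has_field_derivative fst (tangent k s y)) (at y)"
    using DERIV_chain2[OF holomorphic_derivI[OF s(1) open_W[OF k] \<psi>y] d\<psi>] by (simp add: tangent_def)
  show "tangent k s y \<in> cone \<delta>" "norm (tangent k s y) \<le> 2"
    using graph_tangent_in_cone[of "deriv s (\<psi> k y)" \<delta> "deriv (\<psi> k) y"] s(2) \<psi>y
      deriv_\<psi>_bound[OF k y] constants(3) by (auto simp: tangent_def)
  show "deriv Q (\<psi> k y) * snd (tangent k s y) = 1"
    using deriv_Q_\<psi>[OF k y] by (simp add: tangent_def)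
qed

lemma pushforward_derivatives:
  assumes graph: "admissible_graph k s" and y: "y \<in> U k"
  shows "((\<lambda>y. fst (f (lift k s y))) has_field_derivative deriv (\<lambda>y. fst (f (lift k s y))) y) (at y)"
    "norm (deriv (\<lambda>y. fst (f (lift k s y))) y) \<le> \<delta>' + 2*\<alpha>"
    "((\<lambda>y. snd (f (lift k s y))) has_field_derivative deriv (\<lambda>y. snd (f (lift k s y))) y) (at y)"
    "norm (deriv (\<lambda>y. snd (f (lift k s y))) y - 1) \<le> 2*\<alpha>"
proof -
  define x where "x = lift k s y"
  define v where "v = tangent k s y"
  define Df where "Df = frechet_derivative f (at x)"
  define Dg where "Dg = frechet_derivative g (at x)"
  have x: "x \<in> Z" unfolding x_def by (rule lift_in_Z[OF graph y])
  note Df = holomorphic2_on_frechet_derivative[OF f_holomorphic x, folded Df_def]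
  note Dg = holomorphic2_on_frechet_derivative(1)[OF g_holomorphic x, folded Dg_def]
  note v = lift_tangent[OF graph y, folded v_def]
  from has_field_derivative_holomorphic2_along_curve[OF _ Df(2) v(1,2)] Df(1)
  have dfst: "((\<lambda>y. fst (f (lift k s y))) has_field_derivative fst (Df v)) (at y)"
    and dsnd: "((\<lambda>y. snd (f (lift k s y))) has_field_derivative snd (Df v)) (at y)"
    by (simp_all add: lift_def x_def)
  have "snd (Dg v) = deriv Q (snd x) * snd v"
    using snd_derivative_of_skew_product[OF open_Z x Dg] g_skew
      holomorphic_derivI[OF Q_holomorphic open_UNIV UNIV_I] by blast
  then have "snd (Dg v) = 1" using v(5) by (simp add: x_def lift_def)
  moreover have "onorm (\<lambda>w. Df w - Dg w) \<le> \<alpha>"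
    using f_close x by (simp add: C1_close_def Df_def Dg_def)
  ultimately have "norm (fst (Df v)) \<le> \<delta>' + 2*\<alpha>" "norm (snd (Df v) - 1) \<le> 2*\<alpha>"
    using perturbed_tangent_estimates[OF has_derivative_bounded_linear[OF Df(1)]
        has_derivative_bounded_linear[OF Dg]] v(3,4) g_cone[OF x v(3)] by (auto simp: Dg_def)
  then show "((\<lambda>y. fst (f (lift k s y))) has_field_derivative deriv (\<lambda>y. fst (f (lift k s y))) y) (at y)"
    "norm (deriv (\<lambda>y. fst (f (lift k s y))) y) \<le> \<delta>' + 2*\<alpha>"
    "((\<lambda>y. snd (f (lift k s y))) has_field_derivative deriv (\<lambda>y. snd (f (lift k s y))) y) (at y)"
    "norm (deriv (\<lambda>y. snd (f (lift k s y))) y - 1) \<le> 2*\<alpha>"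
    using dfst dsnd by (simp_all add: DERIV_imp_deriv)
qed

lemma pushforward_holomorphic:
  assumes "admissible_graph k s"
  shows "(\<lambda>y. fst (f (lift k s y))) holomorphic_on U k" "(\<lambda>y. snd (f (lift k s y))) holomorphic_on U k"
  using pushforward_derivatives(1,3)[OF assms] open_U assms
  by (auto simp: holomorphic_on_open admissible_graph_def)

lemma pushforward_close:
  assumes "admissible_graph k s" "y \<in> U k"
  shows "norm (snd (f (lift k s y)) - y) \<le> \<alpha>"
    "norm (fst (f (lift k s y)) - fst (g (lift k s y))) \<le> \<alpha>"
proof -
  have x: "lift k s y \<in> Z" by (rule lift_in_Z[OF assms])
  then have "norm (f (lift k s y) - g (lift k s y)) \<le> \<alpha>" using f_close by (simp add: C1_close_def)
  moreover have "snd (g (lift k s y)) = y"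
    using g_skew[OF x] Q_\<psi> assms by (simp add: lift_def admissible_graph_def)
  ultimately show "norm (snd (f (lift k s y)) - y) \<le> \<alpha>"
    "norm (fst (f (lift k s y)) - fst (g (lift k s y))) \<le> \<alpha>"
    using norm_fst_le_norm[of "f (lift k s y) - g (lift k s y)"]
      norm_snd_le_norm[of "f (lift k s y) - g (lift k s y)"] by auto
qed

text \<open>
  Between \<open>r k\<close> and any point of \<open>ball (r j) (2*R)\<close> the first coordinate of the pushed-forward
  curve moves by at most \<open>\<delta> (2R + L)\<close>, so it stays within \<open>e\<close> of \<open>fst (g (lift k s (r k))) \<in> K\<close>;
  the Lebesgue number of that point provides the index \<open>j\<close> of the next graph.
\<close>

lemma pushforward_fst_in_H:
  assumes graph: "admissible_graph k s" and j: "j \<in> I"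
    and H: "ball (fst (g (lift k s (r k)))) e \<subseteq> H j" and y: "y \<in> ball (r j) (2*R)"
  shows "fst (f (lift k s y)) \<in> H j"
proof -
  define A where "A y = fst (f (lift k s y))" for y
  have k: "k \<in> I" using graph by (simp add: admissible_graph_def)
  have dA: "(A has_field_derivative deriv A z) (at z)" "norm (deriv A z) \<le> \<delta>" if "z \<in> U k" for z
    using pushforward_derivatives[OF graph that] constants(4,6) unfolding A_def[abs_def] by auto
  have ball_U: "ball (r j) (2*R) \<subseteq> U k" using cball_sub_U[OF j k] ball_subset_cball by blast
  have rj: "r j \<in> ball (r j) (2*R)" using R_pos by simp
  have "norm (A y - A (r j)) \<le> \<delta> * norm (y - r j)"
  proof (rule field_differentiable_bound[OF convex_ball _ _ y rj])
    show "(A has_field_derivative deriv A z) (at z within ball (r j) (2*R))"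
      "norm (deriv A z) \<le> \<delta>" if "z \<in> ball (r j) (2*R)" for z
      using dA[of z] subsetD[OF ball_U that] by (simp_all add: has_field_derivative_at_within)
  qed
  also have "\<dots> \<le> \<delta> * (2*R)"
    using y constants(1,2) by (intro mult_left_mono) (auto simp: dist_norm norm_minus_commute)
  finally have "norm (A y - A (r j)) \<le> \<delta> * (2*R)" .
  moreover have "norm (A (r j) - A (r k)) \<le> \<delta> * L"
    using variation[OF k pushforward_holomorphic(1)[OF graph] _ j] dA(2) unfolding A_def[abs_def] by blast
  moreover have "norm (A (r k) - fst (g (lift k s (r k)))) \<le> \<alpha>"
    using pushforward_close(2)[OF graph r_in_U[OF k k]] by (simp add: A_def)
  ultimately have "dist (fst (g (lift k s (r k)))) (A y) < e"
    using constants(8) norm_triangle_ineq[of "A y - A (r j)" "A (r j) - A (r k)"]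
      norm_triangle_ineq[of "A y - A (r k)" "A (r k) - fst (g (lift k s (r k)))"]
    by (simp add: dist_norm norm_minus_commute algebra_simps)
  then show ?thesis using H by (auto simp: A_def)
qed

lemma pushforward_inverse:
  assumes graph: "admissible_graph k s" and j: "j \<in> I"
  obtains \<omega> where "\<omega> holomorphic_on ball (r j) R"
    "\<And>t. t \<in> ball (r j) R \<Longrightarrow> \<omega> t \<in> cball t \<alpha> \<and> \<omega> t \<in> ball (r j) (2*R)
        \<and> snd (f (lift k s (\<omega> t))) = t \<and> deriv (\<lambda>y. snd (f (lift k s y))) (\<omega> t) * deriv \<omega> t = 1"
proof -
  define \<phi> where "\<phi> y = snd (f (lift k s y))" for y
  have k: "k \<in> I" using graph by (simp add: admissible_graph_def)
  have ball_U: "ball (r j) (2*R) \<subseteq> U k" using cball_sub_U[OF j k] ball_subset_cball by blast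
  have "\<phi> holomorphic_on ball (r j) (2*R)"
    using pushforward_holomorphic(2)[OF graph] ball_U unfolding \<phi>_def[abs_def]
    by (rule holomorphic_on_subset)
  moreover have "norm (deriv \<phi> y - 1) \<le> 1/2" if "y \<in> ball (r j) (2*R)" for y
    using pushforward_derivatives(4)[OF graph subsetD[OF ball_U that]] constants(5)
    unfolding \<phi>_def[abs_def] by linarith
  moreover have "norm (\<phi> y - y) \<le> \<alpha>" if "y \<in> ball (r j) (2*R)" for y
    using pushforward_close(1)[OF graph subsetD[OF ball_U that]] unfolding \<phi>_def .
  moreover have "0 \<le> \<alpha>" "\<alpha> < R" using constants(4,7) by simp_all
  ultimately obtain \<omega> where "\<omega> holomorphic_on ball (r j) R"
    "\<And>t. t \<in> ball (r j) R \<Longrightarrow> \<omega> t \<in> cball t \<alpha> \<and> \<omega> t \<in> ball (r j) (2*R) \<and> \<phi> (\<omega> t) = t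
        \<and> deriv \<phi> (\<omega> t) * deriv \<omega> t = 1"
    by (rule near_identity_holomorphic_inverse) blast+
  then show thesis using that unfolding \<phi>_def[abs_def] by blast
qed

lemma admissible_pushforward_graph:
  assumes graph: "admissible_graph k s" and j: "j \<in> I" "ball (fst (g (lift k s (r k)))) e \<subseteq> H j"
    and \<omega>: "\<omega> holomorphic_on ball (r j) R"
      "\<And>t. t \<in> ball (r j) R \<Longrightarrow> \<omega> t \<in> ball (r j) (2*R)
         \<and> deriv (\<lambda>y. snd (f (lift k s y))) (\<omega> t) * deriv \<omega> t = 1"
  shows "admissible_graph j ((\<lambda>y. fst (f (lift k s y))) \<circ> \<omega>)"
  unfolding admissible_graph_def
proof (intro conjI j(1) ballI subsetI)
  define A where "A y = fst (f (lift k s y))" for y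
  define \<phi> where "\<phi> y = snd (f (lift k s y))" for y
  have k: "k \<in> I" using graph by (simp add: admissible_graph_def)
  have ball_U: "ball (r j) (2*R) \<subseteq> U k" using cball_sub_U[OF j(1) k] ball_subset_cball by blast
  have W: "W j \<subseteq> ball (r j) R" by (rule W_sub_ball[OF j(1)])
  have "\<omega> holomorphic_on W j" using \<omega>(1) W by (rule holomorphic_on_subset)
  moreover have "\<omega> ` W j \<subseteq> U k" using \<omega>(2) W ball_U by blast
  ultimately show "(A \<circ> \<omega>) holomorphic_on W j"
    using pushforward_holomorphic(1)[OF graph] holomorphic_on_compose_gen
    unfolding A_def[abs_def] by blast
  fix t assume t: "t \<in> W j"
  then have \<omega>t: "\<omega> t \<in> ball (r j) (2*R)" "deriv \<phi> (\<omega> t) * deriv \<omega> t = 1"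
    using \<omega>(2) W unfolding \<phi>_def[abs_def] by blast+
  have "(A \<circ> \<omega> has_field_derivative deriv A (\<omega> t) * deriv \<omega> t) (at t)"
    using DERIV_chain[OF pushforward_derivatives(1)[OF graph subsetD[OF ball_U \<omega>t(1)]]
        holomorphic_derivI[OF \<omega>(1) open_ball subsetD[OF W t]]]
    by (simp add: A_def[abs_def])
  then have "deriv (A \<circ> \<omega>) t = deriv A (\<omega> t) * deriv \<omega> t" by (rule DERIV_imp_deriv)
  also have "\<dots> = deriv A (\<omega> t) / deriv \<phi> (\<omega> t)"
    by (simp add: divide_inverse inverse_unique[OF \<omega>t(2)])
  finally have "deriv (A \<circ> \<omega>) t = deriv A (\<omega> t) / deriv \<phi> (\<omega> t)" .
  moreover have "norm (deriv A (\<omega> t)) \<le> \<delta>' + 2*\<alpha>" "norm (deriv \<phi> (\<omega> t) - 1) \<le> 2*\<alpha>"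
    using pushforward_derivatives(2,4)[OF graph subsetD[OF ball_U \<omega>t(1)]]
    unfolding A_def[abs_def] \<phi>_def[abs_def] by auto
  ultimately show "norm (deriv (A \<circ> \<omega>) t) < \<delta>"
    using slope_quotient_bound[of "deriv A (\<omega> t)" \<delta>' \<alpha> "deriv \<phi> (\<omega> t)" \<delta>] constants(3-6)
    by simp
next
  fix x assume "x \<in> ((\<lambda>y. fst (f (lift k s y))) \<circ> \<omega>) ` W j"
  then obtain t where t: "t \<in> W j" "x = fst (f (lift k s (\<omega> t)))" by auto
  then have "\<omega> t \<in> ball (r j) (2*R)" using \<omega>(2) W_sub_ball[OF j(1)] by blast
  from pushforward_fst_in_H[OF graph j this] show "x \<in> H j" by (simp add: t(2))
qed

lemma admissible_graph_step:
  assumes graph: "admissible_graph k s"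
  obtains j s' where "admissible_graph j s'"
    "\<And>u'. u' \<in> W j \<Longrightarrow> \<exists>u\<in>\<psi> k ` cball (r j) (R+\<alpha>). f (s u, u) = (s' u', u')"
proof -
  have k: "k \<in> I" using graph by (simp add: admissible_graph_def)
  obtain j where j: "j \<in> I" "ball (fst (g (lift k s (r k)))) e \<subseteq> H j"
    using lebesgue g_skew lift_in_Z[OF graph r_in_U[OF k k]] by blast
  obtain \<omega> where \<omega>: "\<omega> holomorphic_on ball (r j) R"
    "\<And>t. t \<in> ball (r j) R \<Longrightarrow> \<omega> t \<in> cball t \<alpha> \<and> \<omega> t \<in> ball (r j) (2*R)
        \<and> snd (f (lift k s (\<omega> t))) = t \<and> deriv (\<lambda>y. snd (f (lift k s y))) (\<omega> t) * deriv \<omega> t = 1"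
    using pushforward_inverse[OF graph j(1)] by blast
  show thesis
  proof (rule that)
    show "admissible_graph j ((\<lambda>y. fst (f (lift k s y))) \<circ> \<omega>)"
      using admissible_pushforward_graph[OF graph j \<omega>(1)] \<omega>(2) by blast
    fix t assume "t \<in> W j"
    then have t: "t \<in> ball (r j) R" using W_sub_ball[OF j(1)] by blast
    have "dist (r j) (\<omega> t) \<le> dist (r j) t + dist t (\<omega> t)" by (rule dist_triangle)
    then have "\<omega> t \<in> cball (r j) (R+\<alpha>)" using \<omega>(2)[OF t] t by (simp add: mem_cball)
    moreover have "f (s (\<psi> k (\<omega> t)), \<psi> k (\<omega> t)) = (((\<lambda>y. fst (f (lift k s y))) \<circ> \<omega>) t, t)"
      using \<omega>(2)[OF t] by (simp add: lift_def prod_eq_iff)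
    ultimately show "\<exists>u\<in>\<psi> k ` cball (r j) (R+\<alpha>). f (s u, u) = (((\<lambda>y. fst (f (lift k s y))) \<circ> \<omega>) t, t)"
      by blast
  qed
qed

lemma admissible_graph_sequence:
  assumes "admissible_graph i \<sigma>"
  obtains kk ss where "kk 0 = i" "ss 0 = \<sigma>" "\<And>n. admissible_graph (kk n) (ss n)"
    "\<And>n u'. u' \<in> W (kk (Suc n)) \<Longrightarrow>
       \<exists>u\<in>\<psi> (kk n) ` cball (r (kk (Suc n))) (R+\<alpha>). f (ss n u, u) = (ss (Suc n) u', u')"
proof -
  define covers where "covers p p' \<longleftrightarrow> (\<forall>u'\<in>W (fst p').
      \<exists>u\<in>\<psi> (fst p) ` cball (r (fst p')) (R+\<alpha>). f (snd p u, u) = (snd p' u', u'))" for p p'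
  define P where "P n p \<longleftrightarrow> admissible_graph (fst p) (snd p) \<and> (n = 0 \<longrightarrow> p = (i, \<sigma>))"
    for n :: nat and p
  have "\<exists>p'. P (Suc n) p' \<and> covers p p'" if "P n p" for n :: nat and p
  proof -
    have "admissible_graph (fst p) (snd p)" using that by (simp add: P_def)
    then obtain j s' where "admissible_graph j s'"
      "\<And>u'. u' \<in> W j \<Longrightarrow> \<exists>u\<in>\<psi> (fst p) ` cball (r j) (R+\<alpha>). f (snd p u, u) = (s' u', u')"
      using admissible_graph_step by blast
    then show ?thesis by (auto simp: P_def covers_def intro!: exI[of _ "(j, s')"])
  qed
  moreover have "\<exists>p. P 0 p" using assms by (auto simp: P_def)
  ultimately obtain F where F: "\<And>n. P n (F n) \<and> covers (F n) (F (Suc n))"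
    using dependent_nat_choice[of P "\<lambda>_. covers"] by blast
  show thesis
  proof (rule that[of "fst \<circ> F" "snd \<circ> F"])
    show "(fst \<circ> F) 0 = i" "(snd \<circ> F) 0 = \<sigma>" using F[of 0] by (auto simp: P_def)
    show "admissible_graph ((fst \<circ> F) n) ((snd \<circ> F) n)" for n using F[of n] by (simp add: P_def)
    show "\<exists>u\<in>\<psi> ((fst \<circ> F) n) ` cball (r ((fst \<circ> F) (Suc n))) (R+\<alpha>).
        f ((snd \<circ> F) n u, u) = ((snd \<circ> F) (Suc n) u', u')" if "u' \<in> W ((fst \<circ> F) (Suc n))" for n u'
      using F[of n] that by (simp add: covers_def)
  qed
qed

definition graph_piece :: "'i \<Rightarrow> (complex \<Rightarrow> complex) \<Rightarrow> 'i \<Rightarrow> (complex \<times> complex) set" where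
  "graph_piece k s j = (\<lambda>u. (s u, u)) ` \<psi> k ` cball (r j) (R+\<alpha>)"

lemma graph_piece_properties:
  assumes graph: "admissible_graph k s" and j: "j \<in> I"
  shows "\<psi> k ` cball (r j) (R+\<alpha>) \<subseteq> W k" "graph_piece k s j \<subseteq> Z"
    "compact (graph_piece k s j)" "graph_piece k s j \<noteq> {}"
proof -
  have k: "k \<in> I" and s: "s holomorphic_on W k" "s ` W k \<subseteq> H k"
    using graph by (auto simp: admissible_graph_def)
  have "cball (r j) (R+\<alpha>) \<subseteq> cball (r j) (2*R)" using constants(7) by (intro subset_cball) simp
  then have cball_U: "cball (r j) (R+\<alpha>) \<subseteq> U k" using cball_sub_U[OF j k] by blast
  then show M_W: "\<psi> k ` cball (r j) (R+\<alpha>) \<subseteq> W k" using \<psi>_maps[OF k] by blast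
  then show "graph_piece k s j \<subseteq> Z" using s(2) H_times_W_sub[OF k] by (auto simp: graph_piece_def)
  have "compact (\<psi> k ` cball (r j) (R+\<alpha>))"
    using continuous_on_subset[OF holomorphic_on_imp_continuous_on[OF \<psi>_holomorphic[OF k]] cball_U]
    by (rule compact_continuous_image[OF _ compact_cball])
  moreover have "continuous_on (\<psi> k ` cball (r j) (R+\<alpha>)) (\<lambda>u. (s u, u))"
    using continuous_on_subset[OF holomorphic_on_imp_continuous_on[OF s(1)] M_W]
    by (intro continuous_intros)
  ultimately show "compact (graph_piece k s j)"
    unfolding graph_piece_def by (rule compact_continuous_image[rotated])
  show "graph_piece k s j \<noteq> {}" using R_pos constants(4) by (simp add: graph_piece_def)
qed

lemma Lambda_set_meets_admissible_graph:
  assumes "admissible_graph i \<sigma>"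
  shows "Lambda_set f Z \<inter> {(\<sigma> w, w) | w. w \<in> W i} \<noteq> {}"
proof -
  obtain kk ss where seq: "kk 0 = i" "ss 0 = \<sigma>" "\<And>n. admissible_graph (kk n) (ss n)"
    "\<And>n u'. u' \<in> W (kk (Suc n)) \<Longrightarrow>
       \<exists>u\<in>\<psi> (kk n) ` cball (r (kk (Suc n))) (R+\<alpha>). f (ss n u, u) = (ss (Suc n) u', u')"
    using admissible_graph_sequence[OF assms] by blast
  have kk: "kk n \<in> I" for n using seq(3) by (simp add: admissible_graph_def)
  define \<Gamma> where "\<Gamma> n = graph_piece (kk n) (ss n) (kk (Suc n))" for n
  have piece: "\<psi> (kk n) ` cball (r (kk (Suc n))) (R+\<alpha>) \<subseteq> W (kk n)" "\<Gamma> n \<subseteq> Z"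
    "compact (\<Gamma> n)" "\<Gamma> n \<noteq> {}" for n
    unfolding \<Gamma>_def by (rule graph_piece_properties[OF seq(3) kk])+
  have cover: "\<Gamma> (Suc n) \<subseteq> f ` \<Gamma> n" for n
  proof
    fix x assume "x \<in> \<Gamma> (Suc n)"
    then obtain u' where u': "u' \<in> \<psi> (kk (Suc n)) ` cball (r (kk (Suc (Suc n)))) (R+\<alpha>)"
      "x = (ss (Suc n) u', u')" by (auto simp: \<Gamma>_def graph_piece_def)
    then have "u' \<in> W (kk (Suc n))" using piece(1) by blast
    then obtain u where u: "u \<in> \<psi> (kk n) ` cball (r (kk (Suc n))) (R+\<alpha>)"
      "f (ss n u, u) = (ss (Suc n) u', u')" using seq(4) by blast
    then have "(ss n u, u) \<in> \<Gamma> n" by (simp add: \<Gamma>_def graph_piece_def)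
    then show "x \<in> f ` \<Gamma> n" by (rule image_eqI[rotated]) (simp add: u(2) u'(2))
  qed
  obtain x where x: "x \<in> \<Gamma> 0" and orbit: "\<And>n. (f ^^ n) x \<in> \<Gamma> n"
    using orbit_through_compact_covers[of \<Gamma> Z f, OF piece(3,4,2)
        holomorphic2_on_imp_continuous_on[OF f_holomorphic] cover] by blast
  have "x \<in> Lambda_set f Z" using orbit piece(2) by (intro Lambda_set_if_orbit_in) blast
  moreover have "x \<in> {(\<sigma> w, w) | w. w \<in> W i}"
    using x piece(1)[of 0] seq(1,2) by (auto simp: \<Gamma>_def graph_piece_def)
  ultimately show ?thesis by blast
qed

end

lemma perturbed_Lambda_set_meets_flat_graphs:
  fixes I :: "'i set" and H W U :: "'i \<Rightarrow> complex set" and r :: "'i \<Rightarrow> complex"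
    and Q :: "complex \<Rightarrow> complex" and g :: "complex \<times> complex \<Rightarrow> complex \<times> complex"
  assumes Z: "Z = (\<Union>i\<in>I. H i \<times> W i)"
    and open_H: "\<And>k. k \<in> I \<Longrightarrow> open (H k)" and open_W: "\<And>k. k \<in> I \<Longrightarrow> open (W k)"
    and open_U: "\<And>k. k \<in> I \<Longrightarrow> open (U k)"
    and Q_holomorphic: "Q holomorphic_on UNIV" and Q_bij: "\<And>k. k \<in> I \<Longrightarrow> bij_betw Q (W k) (U k)"
    and Q_expanding: "\<And>k u. k \<in> I \<Longrightarrow> u \<in> W k \<Longrightarrow> norm (deriv Q u) \<ge> 1"
    and cball_sub_U: "\<And>j k. j \<in> I \<Longrightarrow> k \<in> I \<Longrightarrow> cball (r j) (2*R) \<subseteq> U k"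
    and W_sub_ball: "\<And>j. j \<in> I \<Longrightarrow> W j \<subseteq> ball (r j) R"
    and variation: "\<And>k A M j. k \<in> I \<Longrightarrow> A holomorphic_on U k \<Longrightarrow>
          (\<forall>z\<in>U k. norm (deriv A z) \<le> M) \<Longrightarrow> j \<in> I \<Longrightarrow> norm (A (r j) - A (r k)) \<le> M * L"
    and lebesgue: "\<And>p. p \<in> K \<Longrightarrow> \<exists>j\<in>I. ball p e \<subseteq> H j"
    and constants: "R > 0" "e > 0" "\<delta> \<le> 1" "\<delta> * (2*R + L) < e/2"
    and g: "holomorphic2_on g Z \<and> (\<forall>x\<in>Z. fst (g x) \<in> K \<and> snd (g x) = Q (snd x))
      \<and> contracts_cone g Z \<delta>"
  shows "\<exists>\<alpha>>0. \<forall>f. \<forall>i\<in>I. \<forall>\<sigma>. holomorphic2_on f Z \<and> C1_close Z f g \<alpha>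
           \<and> \<sigma> holomorphic_on W i \<and> \<sigma> ` W i \<subseteq> H i \<and> (\<exists>c<\<delta>. \<forall>w\<in>W i. norm (deriv \<sigma> w) \<le> c)
           \<longrightarrow> Lambda_set f Z \<inter> {(\<sigma> w, w) | w. w \<in> W i} \<noteq> {}"
proof -
  have g_holomorphic: "holomorphic2_on g Z" using g by blast
  obtain \<delta>' where \<delta>': "0 < \<delta>'" "\<delta>' < \<delta>" "\<And>x v. x \<in> Z \<Longrightarrow> v \<in> cone \<delta> \<Longrightarrow>
      frechet_derivative g (at x) v \<in> cone \<delta>'"
    using g unfolding contracts_cone_def by blast
  obtain \<psi> where \<psi>: "\<And>k. k \<in> I \<Longrightarrow> \<psi> k holomorphic_on U k" "\<And>k. k \<in> I \<Longrightarrow> \<psi> k ` U k \<subseteq> W k"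
    "\<And>k y. k \<in> I \<Longrightarrow> y \<in> U k \<Longrightarrow> Q (\<psi> k y) = y"
    "\<And>k y. k \<in> I \<Longrightarrow> y \<in> U k \<Longrightarrow> deriv Q (\<psi> k y) * deriv (\<psi> k) y = 1"
    using holomorphic_inverse_branches[where I=I and W=W and U=U, OF Q_holomorphic open_W Q_bij]
    by blast
  define \<alpha> where "\<alpha> = min (1/4) (min ((\<delta> - \<delta>')/8) (min (R/2) (e/4)))"
  have \<alpha>: "0 < \<alpha>" "\<alpha> \<le> 1/4" "8*\<alpha> \<le> \<delta> - \<delta>'" "\<alpha> < R" "\<delta> * (2*R + L) + \<alpha> < e"
  proof -
    show "0 < \<alpha>" unfolding \<alpha>_def using \<delta>'(2) constants(1,2) by simp
    have "\<alpha> \<le> 1/4" "\<alpha> \<le> (\<delta> - \<delta>')/8" "\<alpha> \<le> R/2" "\<alpha> \<le> e/4" unfolding \<alpha>_def by linarith+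
    then show "\<alpha> \<le> 1/4" "8*\<alpha> \<le> \<delta> - \<delta>'" "\<alpha> < R" "\<delta> * (2*R + L) + \<alpha> < e"
      using constants by auto
  qed
  show ?thesis
  proof (intro exI[of _ \<alpha>] conjI \<alpha>(1) allI ballI impI)
    fix f i \<sigma> assume i: "i \<in> I" and hyps: "holomorphic2_on f Z \<and> C1_close Z f g \<alpha>
      \<and> \<sigma> holomorphic_on W i \<and> \<sigma> ` W i \<subseteq> H i \<and> (\<exists>c<\<delta>. \<forall>w\<in>W i. norm (deriv \<sigma> w) \<le> c)"
    have f: "holomorphic2_on f Z" "C1_close Z f g \<alpha>" using hyps by blast+
    interpret graph_transform I H W U r Q \<psi> Z K f g R L e \<delta> \<delta>' \<alpha>
    proof
      show "open Z" unfolding Z using open_H open_W by (intro open_UN ballI open_Times) auto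
      show "H k \<times> W k \<subseteq> Z" if "k \<in> I" for k using that Z by blast
      show "fst (g x) \<in> K \<and> snd (g x) = Q (snd x)" if "x \<in> Z" for x using g that by blast
    qed (fact open_W open_U Q_holomorphic Q_expanding \<psi> f g_holomorphic \<delta>' cball_sub_U W_sub_ball
        variation lebesgue constants(3) \<alpha>)+
    have "admissible_graph i \<sigma>"
      using hyps i unfolding admissible_graph_def by fastforce
    then show "Lambda_set f Z \<inter> {(\<sigma> w, w) | w. w \<in> W i} \<noteq> {}"
      by (rule Lambda_set_meets_admissible_graph)
  qed
qed

section \<open>Uniform constants for the neighbourhoods\<close>

lemma exists_small_positive:
  fixes e c :: real
  assumes "e > 0" "c \<ge> 0"
  obtains \<delta> where "\<delta> > 0" "\<delta> \<le> 1" "\<delta> * c < e"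
proof
  define \<delta> where "\<delta> = min 1 (e / (c + 1))"
  show "\<delta> > 0" "\<delta> \<le> 1" using assms by (simp_all add: \<delta>_def)
  have "\<delta> * c \<le> e / (c + 1) * c" using assms by (intro mult_right_mono) (simp_all add: \<delta>_def)
  also have "\<dots> < e" using assms by (simp add: field_simps)
  finally show "\<delta> * c < e" .
qed

lemma shrinking_sets_in_balls:
  fixes V :: "'i \<Rightarrow> nat \<Rightarrow> 'a::metric_space set"
  assumes "\<And>i l. i \<in> I \<Longrightarrow> bounded (V i l)" "\<And>i l. i \<in> I \<Longrightarrow> r i \<in> V i l"
    and "0 < \<theta>" "\<theta> < 1" "\<And>i l. i \<in> I \<Longrightarrow> diameter (V i l) \<le> C * \<theta> ^ l" "R > 0"
  obtains l1 where "\<And>l i. l1 \<le> l \<Longrightarrow> i \<in> I \<Longrightarrow> V i l \<subseteq> ball (r i) R"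
proof -
  have "(\<lambda>l. \<bar>C\<bar> * \<theta> ^ l) \<longlonglongrightarrow> \<bar>C\<bar> * 0"
    using assms(3,4) by (intro tendsto_mult tendsto_const LIMSEQ_power_zero) auto
  then obtain l1 where l1: "\<And>l. l1 \<le> l \<Longrightarrow> \<bar>C\<bar> * \<theta> ^ l < R"
    using assms(6) order_tendstoD(2)[of _ 0 sequentially R] by (auto simp: eventually_sequentially)
  show ?thesis
  proof (rule that[of l1], rule subsetI)
    fix l i w assume l: "l1 \<le> l" and i: "i \<in> I" and w: "w \<in> V i l"
    have "dist (r i) w \<le> diameter (V i l)"
      by (rule diameter_bounded_bound[OF assms(1)[OF i] assms(2)[OF i] w])
    also have "\<dots> \<le> \<bar>C\<bar> * \<theta> ^ l"
    proof -
      have "C * \<theta> ^ l \<le> \<bar>C\<bar> * \<theta> ^ l" using assms(3) by (intro mult_right_mono) auto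
      then show ?thesis using assms(5)[OF i, of l] by linarith
    qed
    also have "\<dots> < R" by (rule l1[OF l])
    finally show "w \<in> ball (r i) R" by simp
  qed
qed

lemma shrinking_neighbourhood_constants:
  fixes V :: "'i \<Rightarrow> nat \<Rightarrow> complex set"
  assumes "finite I" and open_V: "\<And>k l. k \<in> I \<Longrightarrow> open (V k l)"
    and "\<And>k. k \<in> I \<Longrightarrow> connected (V k 0)" and "\<And>k l. k \<in> I \<Longrightarrow> bounded (V k l)"
    and "\<And>k l. k \<in> I \<Longrightarrow> r k \<in> V k l" and r_in: "\<And>j k. j \<in> I \<Longrightarrow> k \<in> I \<Longrightarrow> r j \<in> V k 0"
    and "0 < \<theta>" "\<theta> < 1" "\<And>k l. k \<in> I \<Longrightarrow> diameter (V k l) \<le> C * \<theta> ^ l"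
  obtains R L l1 where "R > 0" "L \<ge> 0" "\<And>j k. j \<in> I \<Longrightarrow> k \<in> I \<Longrightarrow> cball (r j) (2*R) \<subseteq> V k 0"
    "\<And>k A M j. k \<in> I \<Longrightarrow> A holomorphic_on V k 0 \<Longrightarrow> (\<forall>z\<in>V k 0. norm (deriv A z) \<le> M)
       \<Longrightarrow> j \<in> I \<Longrightarrow> norm (A (r j) - A (r k)) \<le> M * L"
    "\<And>l i. l1 \<le> l \<Longrightarrow> i \<in> I \<Longrightarrow> V i l \<subseteq> ball (r i) R"
proof -
  obtain \<rho> where "\<rho> > 0" and "\<And>j k. j \<in> I \<Longrightarrow> k \<in> I \<Longrightarrow> cball (r j) \<rho> \<subseteq> V k 0"
    using uniform_cball_in_open_sets[of I "\<lambda>k. V k 0" r, OF assms(1) open_V r_in] by blast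
  then have "\<rho>/2 > 0" "\<And>j k. j \<in> I \<Longrightarrow> k \<in> I \<Longrightarrow> cball (r j) (2*(\<rho>/2)) \<subseteq> V k 0" by simp_all
  moreover obtain L where "L \<ge> 0" "\<And>k A M j. k \<in> I \<Longrightarrow> A holomorphic_on V k 0 \<Longrightarrow>
      (\<forall>z\<in>V k 0. norm (deriv A z) \<le> M) \<Longrightarrow> j \<in> I \<Longrightarrow> norm (A (r j) - A (r k)) \<le> M * L"
    using uniform_variation_bound[of I "\<lambda>k. V k 0" r, OF assms(1) open_V assms(3) r_in] by blast
  moreover obtain l1 where "\<And>l i. l1 \<le> l \<Longrightarrow> i \<in> I \<Longrightarrow> V i l \<subseteq> ball (r i) (\<rho>/2)"
    using shrinking_sets_in_balls[where I=I and V=V and r=r and R="\<rho>/2",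
        OF assms(4,5,7,8,9) \<open>\<rho>/2 > 0\<close>] by blast
  ultimately show thesis using that by blast
qed

lemma expanding_pullback_tower:
  assumes F: "\<And>l. F l = P ^^ l" and pullback: "\<And>i l. i \<in> I \<Longrightarrow> bij_betw P (V i (Suc l)) (V i l)"
    and center: "\<And>i l. i \<in> I \<Longrightarrow> r i \<in> V i l"
    and expanding: "\<exists>A l0'. A > 0 \<and> l0' \<ge> 1 \<and> (\<forall>l\<ge>l0'. \<forall>i\<in>I.
      (\<forall>w\<in>V i l. A * \<mu> i ^ l \<le> cmod (deriv (F l) w)) \<and> A * \<mu> i ^ l > 1 \<and>
      closure (\<Union>j\<in>I. V j l) \<subseteq> F l ` V i l \<and> more l i)"
  obtains l0' where "l0' \<ge> 1" "\<And>i l. i \<in> I \<Longrightarrow> bij_betw (F l) (V i l) (V i 0)"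
    "\<And>l i w. l0' \<le> l \<Longrightarrow> i \<in> I \<Longrightarrow> w \<in> V i l \<Longrightarrow> 1 \<le> cmod (deriv (F l) w)"
    "\<And>j k. j \<in> I \<Longrightarrow> k \<in> I \<Longrightarrow> r j \<in> V k 0"
proof -
  obtain A l0' where "l0' \<ge> 1" and E: "\<And>l i. l0' \<le> l \<Longrightarrow> i \<in> I \<Longrightarrow>
      (\<forall>w\<in>V i l. A * \<mu> i ^ l \<le> cmod (deriv (F l) w)) \<and> A * \<mu> i ^ l > 1 \<and>
      closure (\<Union>j\<in>I. V j l) \<subseteq> F l ` V i l"
    using expanding by blast
  have bij: "bij_betw (F l) (V i l) (V i 0)" if "i \<in> I" for i l
    unfolding F by (rule bij_betw_funpow_tower[of P "V i", OF pullback[OF that]])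
  show ?thesis
  proof (rule that[OF \<open>l0' \<ge> 1\<close> bij])
    show "1 \<le> cmod (deriv (F l) w)" if "l0' \<le> l" "i \<in> I" "w \<in> V i l" for l i w
      using E[OF that(1,2)] that(3) by force
    show "r j \<in> V k 0" if "j \<in> I" "k \<in> I" for j k
    proof -
      have "r j \<in> (\<Union>j\<in>I. V j l0')" using center[OF that(1)] that(1) by blast
      also have "\<dots> \<subseteq> closure (\<Union>j\<in>I. V j l0')" by (rule closure_subset)
      also have "\<dots> \<subseteq> F l0' ` V k l0'" using E[OF order_refl that(2)] by (elim conjE)
      also have "\<dots> = V k 0" using bij[OF that(2)] by (simp add: bij_betw_def)
      finally show ?thesis .
    qed
  qed
qed

lemma Lebesgue_number_indexed:
  assumes "compact K" "K \<subseteq> (\<Union>i\<in>I. H i)" "\<And>i. i \<in> I \<Longrightarrow> open (H i)"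
  obtains e where "e > 0" "\<And>p. p \<in> K \<Longrightarrow> \<exists>i\<in>I. ball p e \<subseteq> H i"
proof -
  have "\<And>G. G \<in> H ` I \<Longrightarrow> open G" using assms(3) by blast
  then obtain e where "e > 0" "\<And>p. p \<in> K \<Longrightarrow> \<exists>G\<in>H ` I. ball p e \<subseteq> G"
    using Heine_Borel_lemma[OF assms(1,2)] by blast
  then show thesis using that by blast
qed

text \<open>
  The dynamical hypotheses on \<open>q\<close> and the \<open>r\<^sub>i\<close> only serve to construct the \<open>V\<^sub>i\<^sup>l\<close>; the proof
  uses nothing but the listed properties of the \<open>V\<^sub>i\<^sup>l\<close>.
\<close>

theorem proposition3p3:
  fixes q :: "complex poly" and r :: "nat \<Rightarrow> complex" and m1 :: nat
    and V :: "nat \<Rightarrow> nat \<Rightarrow> complex set" and H :: "nat \<Rightarrow> complex set"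
    and K :: "complex set"
  assumes deg: "degree q \<ge> 2"
    and m1_pos: "m1 \<ge> 1"
    and r_distinct: "r 1 \<noteq> r 2" "r 1 \<noteq> r 3" "r 2 \<noteq> r 3"
    and r_periodic: "\<And>i. i \<in> {1..3} \<Longrightarrow> (poly q ^^ m1) (r i) = r i"
    and r_repelling: "\<And>i. i \<in> {1..3} \<Longrightarrow> cmod (deriv (poly q ^^ m1) (r i)) > 1"
    and r_not_postcrit: "\<And>i. i \<in> {1..3} \<Longrightarrow> r i \<notin> postcritical_set q"
    and V_open: "\<And>i l. i \<in> {1..3} \<Longrightarrow> open (V i l)"
    and V_connected: "\<And>i l. i \<in> {1..3} \<Longrightarrow> connected (V i l)"
    and V_bounded: "\<And>i l. i \<in> {1..3} \<Longrightarrow> bounded (V i l)"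
    and V_center: "\<And>i l. i \<in> {1..3} \<Longrightarrow> r i \<in> V i l"
    and V_pullback: "\<And>i l. i \<in> {1..3} \<Longrightarrow>
          bij_betw (poly q ^^ m1) (V i (Suc l)) (V i l)"
    and V_diam: "\<exists>C \<theta>. 0 < \<theta> \<and> \<theta> < 1 \<and>
          (\<forall>i\<in>{1..3}. \<forall>l. diameter (V i l) \<le> C * \<theta> ^ l)"
    and V_expanding: "\<exists>A l0'. A > 0 \<and> l0' \<ge> 1 \<and> (\<forall>l\<ge>l0'. \<forall>i\<in>{1..3}.
          (\<forall>w\<in>V i l. A * cmod (deriv (poly q ^^ m1) (r i)) ^ l
                        \<le> cmod (deriv (poly q ^^ (l * m1)) w)) \<and>
          A * cmod (deriv (poly q ^^ m1) (r i)) ^ l > 1 \<and>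
          closure (\<Union>j\<in>{1..3}. V j l) \<subseteq> (poly q ^^ (l * m1)) ` V i l \<and>
          (\<forall>j\<in>{1..3}. bij_betw (poly q ^^ (l * m1))
                         (V i l \<inter> (poly q ^^ (l * m1)) -` V j l) (V j l)))"
    and H_open: "\<And>i. i \<in> {1..3} \<Longrightarrow> open (H i)"
    and K_compact: "compact K"
    and K_sub: "K \<subseteq> (\<Union>i\<in>{1..3}. H i)"
  shows "\<exists>\<delta>0 > 0. \<exists>l0 \<ge> 1. \<forall>l \<ge> l0.
     \<forall>g :: complex \<times> complex \<Rightarrow> complex \<times> complex.
       holomorphic2_on g (\<Union>i\<in>{1..3}. H i \<times> V i l)
       \<and> (\<forall>x\<in>(\<Union>i\<in>{1..3}. H i \<times> V i l). fst (g x) \<in> K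
                \<and> snd (g x) = (poly q ^^ (l * m1)) (snd x))
       \<and> contracts_cone g (\<Union>i\<in>{1..3}. H i \<times> V i l) \<delta>0
       \<longrightarrow> (\<exists>\<alpha> > 0. \<forall>f :: complex \<times> complex \<Rightarrow> complex \<times> complex.
              \<forall>i\<in>{1..3}. \<forall>\<sigma> :: complex \<Rightarrow> complex.
                holomorphic2_on f (\<Union>i\<in>{1..3}. H i \<times> V i l)
                \<and> C1_close (\<Union>i\<in>{1..3}. H i \<times> V i l) f g \<alpha>
                \<and> \<sigma> holomorphic_on V i l \<and> \<sigma> ` V i l \<subseteq> H i
                \<and> (\<exists>c < \<delta>0. \<forall>w\<in>V i l. cmod (deriv \<sigma> w) \<le> c)
                \<longrightarrow> Lambda_set f (\<Union>i\<in>{1..3}. H i \<times> V i l)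
                      \<inter> {(\<sigma> w, w) | w. w \<in> V i l} \<noteq> {})"
proof -
  have tower: "\<And>l. poly q ^^ (l * m1) = (poly q ^^ m1) ^^ l" by (simp add: funpow_mult mult.commute)
  obtain l0' where "l0' \<ge> 1"
    and bij: "\<And>k l. k \<in> {1..3} \<Longrightarrow> bij_betw (poly q ^^ (l * m1)) (V k l) (V k 0)"
    and expanding: "\<And>l k u. l0' \<le> l \<Longrightarrow> k \<in> {1..3} \<Longrightarrow> u \<in> V k l
      \<Longrightarrow> 1 \<le> norm (deriv (poly q ^^ (l * m1)) u)"
    and r_in: "\<And>j k. j \<in> {1..3} \<Longrightarrow> k \<in> {1..3} \<Longrightarrow> r j \<in> V k 0"
    using expanding_pullback_tower[where F="\<lambda>l. poly q ^^ (l * m1)" and P="poly q ^^ m1" and I="{1..3}"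
        and V=V and r=r, OF tower V_pullback V_center V_expanding] by blast
  obtain C \<theta> where \<theta>: "0 < \<theta>" "\<theta> < 1" "\<And>i l. i \<in> {1..3} \<Longrightarrow> diameter (V i l) \<le> C * \<theta> ^ l"
    using V_diam by blast
  obtain R L l1 where "R > 0" "L \<ge> 0"
    and cball: "\<And>j k. j \<in> {1..3} \<Longrightarrow> k \<in> {1..3} \<Longrightarrow> cball (r j) (2*R) \<subseteq> V k 0"
    and variation: "\<And>k A M j. k \<in> {1..3} \<Longrightarrow> A holomorphic_on V k 0 \<Longrightarrow>
      (\<forall>z\<in>V k 0. norm (deriv A z) \<le> M) \<Longrightarrow> j \<in> {1..3} \<Longrightarrow> norm (A (r j) - A (r k)) \<le> M * L"
    and small: "\<And>l i. l1 \<le> l \<Longrightarrow> i \<in> {1..3} \<Longrightarrow> V i l \<subseteq> ball (r i) R"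
    using shrinking_neighbourhood_constants[where I="{1..3}" and V=V and r=r,
        OF finite_atLeastAtMost V_open V_connected V_bounded V_center r_in \<theta>] by blast
  obtain e where "e > 0" and lebesgue: "\<And>p. p \<in> K \<Longrightarrow> \<exists>j\<in>{1..3}. ball p e \<subseteq> H j"
    using Lebesgue_number_indexed[OF K_compact K_sub H_open] by blast
  obtain \<delta>0 where "\<delta>0 > 0" "\<delta>0 \<le> 1" "\<delta>0 * (2*R + L) < e/2"
    using exists_small_positive[of "e/2" "2*R + L"] \<open>e > 0\<close> \<open>R > 0\<close> \<open>L \<ge> 0\<close> by auto
  show ?thesis
  proof (rule exI[of _ \<delta>0], intro conjI exI[of _ "max l0' l1"] allI impI, goal_cases)
    case 1 show ?case by fact
  next
    case 2 show ?case using \<open>l0' \<ge> 1\<close> by simp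
  next
    case (3 l g)
    then have "l0' \<le> l" "l1 \<le> l" by simp_all
    show ?case
      by (rule perturbed_Lambda_set_meets_flat_graphs[where W="\<lambda>i. V i l" and U="\<lambda>i. V i 0",
            OF refl H_open V_open V_open holomorphic_on_funpow_poly bij expanding[OF \<open>l0' \<le> l\<close>]
            cball small[OF \<open>l1 \<le> l\<close>] variation lebesgue \<open>R > 0\<close> \<open>e > 0\<close> \<open>\<delta>0 \<le> 1\<close>
            \<open>\<delta>0 * _ < e/2\<close> 3(2)])
  qed
qed

end
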